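(* Let $\Sigma$ be a signature, $X,Y$ sets, $H$ an interpretation of $\Sigma$ over $Y$, $f:X\to Y$, and $\varphi = f^\dagger_H:[\![\Sigma]\!]X\to Y$. Then for every well-typed template $\Gamma;Z\vdash T:\Sigma$ with $Z=(z_j:B_j\to * )_j$, every $\eta\in[\![\Gamma]\!]$ and every $\zeta=(\zeta_j)_j\in[\![Z]\!]([\![\Sigma]\!]X)$, $$\varphi\big([\![T]\!]_{F^X_\Sigma}(\eta;\zeta)\big) = [\![T]\!]_H\big(\eta;(\varphi\circ\zeta_j)_j\big).$$ Moreover, every function $\varphi:[\![\Sigma]\!]X\to Y$ satisfying this equation for all well-typed templates $T$ over $\Sigma$ (in all contexts $\Gamma$, $Z$) and all $\eta,\zeta$ is of the form $f^\dagger_H$ for some function $f:X\to Y$.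
   Context: Setting: a calculus of algebraic effects. Value types $A,B ::= \mathtt{unit}\mid\mathtt{bool}\mid A\to\underline{C}\mid\underline{C}\Rightarrow\underline{D}$; computation types $A\,!\,\Sigma/\mathcal{E}$, where a signature $\Sigma$ is a finite set of typed operations $\mathit{op}:A_{\mathit{op}}\to B_{\mathit{op}}$ with distinct names. Values $v ::= x \mid () \mid \mathtt{true} \mid \mathtt{false} \mid \mathtt{fun}\ x \mapsto c \mid \mathtt{handler}\,(\ldots)$; value contexts $\Gamma=(x_i:A_i)_i$; well-typed values $\Gamma\vdash v:A$ have denotations $[\![v]\!]:[\![\Gamma]\!]\to[\![A]\!]$, where $[\![\varepsilon]\!]=\{\star\}$, $[\![\Gamma,x:A]\!]=[\![\Gamma]\!]\times[\![A]\!]$, $[\![\mathtt{unit}]\!]=\{\star\}$, $[\![\mathtt{bool}]\!]=\{\mathrm{ff},\mathrm{tt}\}$, $[\![\mathtt{true}]\!]\eta=\mathrm{tt}$, $[\![\mathtt{false}]\!]\eta=\mathrm{ff}$, variables denote projections, and function/handler types denote sets of functions. For a set $X$, $[\![\Sigma]\!]X$ is the inductively defined set with elements $\mathrm{in}_{\mathrm{return}}(a)$ for $a\in X$ and $\mathrm{in}_{\mathit{op}}(a;\kappa)$ for $(\mathit{op}:A_{\mathit{op}}\to B_{\mathit{op}})\in\Sigma$, $a\in[\![A_{\mathit{op}}]\!]$, $\kappa:[\![B_{\mathit{op}}]\!]\to[\![\Sigma]\!]X$. An interpretation $H$ of $\Sigma$ over a set $Y$ is a family of functions $H_{\mathit{op}}:[\![A_{\mathit{op}}]\!]\times([\![B_{\mathit{op}}]\!]\to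 Y)\to Y$, $\mathit{op}\in\Sigma$. The free interpretation $F^X_\Sigma$ over $[\![\Sigma]\!]X$ is $(F^X_\Sigma)_{\mathit{op}}(a,\kappa)=\mathrm{in}_{\mathit{op}}(a;\kappa)$. For $f:X\to Y$ the lift $f^\dagger_H:[\![\Sigma]\!]X\to Y$ is defined recursively by $f^\dagger_H(\mathrm{in}_{\mathrm{return}}(x))=f(x)$ and $f^\dagger_H(\mathrm{in}_{\mathit{op}}(x;\kappa))=H_{\mathit{op}}(x,f^\dagger_H\circ\kappa)$. Templates: $T ::= z(v)\mid\mathtt{if}\ v\ \mathtt{then}\ T_1\ \mathtt{else}\ T_2\mid\mathit{op}(v;y.T)$, typed in a value context $\Gamma$ and a template context $Z=(z_j:B_j\to * )_j$: $\Gamma;Z\vdash z(v):\Sigma$ if $(z:A\to * )\in Z$ and $\Gamma\vdash v:A$; $\Gamma;Z\vdash\mathtt{if}\ v\ \mathtt{then}\ T_1\ \mathtt{else}\ T_2:\Sigma$ if $\Gamma\vdash v:\mathtt{bool}$ and $\Gamma;Z\vdash T_i:\Sigma$; $\Gamma;Z\vdash\mathit{op}(v;y.T):\Sigma$ if $(\mathit{op}:A_{\mathit{op}}\to B_{\mathit{op}})\in\Sigma$, $\Gamma\vdash v:A_{\mathit{op}}$, $\Gamma,y:B_{\mathit{op}};Z\vdash T:\Sigma$. For a set $Y$, $[\![Z]\!]Y=\prod_j Y^{[\![B_j]\!]}$. For an interpretation $H$ of $\Sigma$ over $Y$, the template denotation $[\![T]\!]_H:[\![\Gamma]\!]\times[\![Z]\!]Y\to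 Y$ is defined by $[\![z_j(v)]\!]_H(\eta;\zeta)=\zeta_j([\![v]\!]\eta)$; $[\![\mathtt{if}\ v\ \mathtt{then}\ T_1\ \mathtt{else}\ T_2]\!]_H(\eta;\zeta)$ equals $[\![T_1]\!]_H(\eta;\zeta)$ if $[\![v]\!]\eta=\mathrm{tt}$ and $[\![T_2]\!]_H(\eta;\zeta)$ if $[\![v]\!]\eta=\mathrm{ff}$; $[\![\mathit{op}(v;y.T)]\!]_H(\eta;\zeta)=H_{\mathit{op}}([\![v]\!]\eta,\lambda b.[\![T]\!]_H((\eta,b);\zeta))$. *)

theory Defs
  imports "HOL-Library.FuncSet"
begin

type_synonym name = string

text \<open>Value types and computation types.  The effect-theory component E of a
computation type is left abstract (type parameter 'e); a signature inside a
computation type is a list of typed operations.\<close>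
datatype 'e vty = TUnit | TBool | TFun "'e vty" "'e cty" | THandler "'e cty" "'e cty"
and 'e cty = CTy "'e vty" "(name \<times> 'e vty \<times> 'e vty) list" 'e

text \<open>Values: variables, unit, booleans, and further values ('w), standing for
fun- and handler-values, whose typing and denotation are given abstractly.\<close>
datatype 'w val = VVar name | VUnit | VTrue | VFalse | VExt 'w

text \<open>Value contexts: the most recently added variable is the head of the list,
i.e. (Gamma, x:A) is (x,A) # Gamma.\<close>
type_synonym 'e ctx = "(name \<times> 'e vty) list"

text \<open>Templates: z(v), if v then T1 else T2, op(v; y.T).\<close>
datatype 'w tmpl = TZ name "'w val" | TIf "'w val" "'w tmpl" "'w tmpl"
  | TOp name "'w val" name "'w tmpl"

text \<open>All value denotations live in one semantic universe 'v.  TA gives the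
denotation [[A]] of each value type as a subset of it.\<close>
record ('e, 'w, 'v) vsem =
  TA :: "'e vty \<Rightarrow> 'v set"
  uv :: 'v
  tt :: 'v
  ff :: 'v
  etyp :: "'e ctx \<Rightarrow> 'w \<Rightarrow> 'e vty \<Rightarrow> bool"
  eden :: "'e ctx \<Rightarrow> 'w \<Rightarrow> 'v list \<Rightarrow> 'v"

definition env :: "('e, 'w, 'v) vsem \<Rightarrow> 'e ctx \<Rightarrow> 'v list set" where
  "env S \<Gamma> = {\<eta>. length \<eta> = length \<Gamma> \<and> (\<forall>i<length \<Gamma>. \<eta> ! i \<in> TA S (snd (\<Gamma> ! i)))}"

fun var_den :: "'e ctx \<Rightarrow> 'v list \<Rightarrow> name \<Rightarrow> 'v" where
  "var_den ((y, A) # \<Gamma>) (b # \<eta>) x = (if x = y then b else var_den \<Gamma> \<eta> x)"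
| "var_den _ _ x = undefined"

fun vtyp :: "('e, 'w, 'v) vsem \<Rightarrow> 'e ctx \<Rightarrow> 'w val \<Rightarrow> 'e vty \<Rightarrow> bool" where
  "vtyp S \<Gamma> (VVar x) A = (map_of \<Gamma> x = Some A)"
| "vtyp S \<Gamma> VUnit A = (A = TUnit)"
| "vtyp S \<Gamma> VTrue A = (A = TBool)"
| "vtyp S \<Gamma> VFalse A = (A = TBool)"
| "vtyp S \<Gamma> (VExt w) A = etyp S \<Gamma> w A"

fun vden :: "('e, 'w, 'v) vsem \<Rightarrow> 'e ctx \<Rightarrow> 'w val \<Rightarrow> 'v list \<Rightarrow> 'v" where
  "vden S \<Gamma> (VVar x) \<eta> = var_den \<Gamma> \<eta> x"
| "vden S \<Gamma> VUnit \<eta> = uv S"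
| "vden S \<Gamma> VTrue \<eta> = tt S"
| "vden S \<Gamma> VFalse \<eta> = ff S"
| "vden S \<Gamma> (VExt w) \<eta> = eden S \<Gamma> w \<eta>"

definition sem_ok :: "('e, 'w, 'v) vsem \<Rightarrow> bool" where
  "sem_ok S \<longleftrightarrow> TA S TUnit = {uv S} \<and> TA S TBool = {ff S, tt S} \<and> ff S \<noteq> tt S \<and>
     (\<forall>\<Gamma> w A \<eta>. etyp S \<Gamma> w A \<longrightarrow> \<eta> \<in> env S \<Gamma> \<longrightarrow> eden S \<Gamma> w \<eta> \<in> TA S A)"

type_synonym 'e sig = "(name \<times> 'e vty \<times> 'e vty) set"

definition wf_sig :: "'e sig \<Rightarrow> bool" where
  "wf_sig \<Sigma> \<longleftrightarrow> finite \<Sigma> \<and>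
     (\<forall>o1 A1 B1 o2 A2 B2. (o1, A1, B1) \<in> \<Sigma> \<longrightarrow> (o2, A2, B2) \<in> \<Sigma> \<longrightarrow> o1 = o2 \<longrightarrow> A1 = A2 \<and> B1 = B2)"

definition opB :: "'e sig \<Rightarrow> name \<Rightarrow> 'e vty" where
  "opB \<Sigma> op = (THE B. \<exists>A. (op, A, B) \<in> \<Sigma>)"

text \<open>Trees: in_return(a) and in_op(a; kappa).\<close>
datatype ('v, 'x) tree = Ret 'x | Node name 'v "'v \<Rightarrow> ('v, 'x) tree"

text \<open>[[Sigma]]X; continuations are functions on [[B_op]] (extensional).\<close>
inductive_set free_set :: "('e, 'w, 'v) vsem \<Rightarrow> 'e sig \<Rightarrow> 'x set \<Rightarrow> ('v, 'x) tree set"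
  for S \<Sigma> X where
  ret: "x \<in> X \<Longrightarrow> Ret x \<in> free_set S \<Sigma> X"
| node: "(op, A, B) \<in> \<Sigma> \<Longrightarrow> a \<in> TA S A \<Longrightarrow> \<kappa> \<in> extensional (TA S B) \<Longrightarrow>
         (\<forall>b\<in>TA S B. \<kappa> b \<in> free_set S \<Sigma> X) \<Longrightarrow> Node op a \<kappa> \<in> free_set S \<Sigma> X"

definition is_interp :: "('e, 'w, 'v) vsem \<Rightarrow> 'e sig \<Rightarrow> 'y set \<Rightarrow> (name \<Rightarrow> 'v \<Rightarrow> ('v \<Rightarrow> 'y) \<Rightarrow> 'y) \<Rightarrow> bool" where
  "is_interp S \<Sigma> Y H \<longleftrightarrow> (\<forall>op A B a k. (op, A, B) \<in> \<Sigma> \<longrightarrow> a \<in> TA S A \<longrightarrow> k \<in> TA S B \<rightarrow>\<^sub>E Y \<longrightarrow> H op a k \<in> Y)"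

definition free_interp :: "name \<Rightarrow> 'v \<Rightarrow> ('v \<Rightarrow> ('v, 'x) tree) \<Rightarrow> ('v, 'x) tree" where
  "free_interp op a \<kappa> = Node op a \<kappa>"

primrec lift :: "('e, 'w, 'v) vsem \<Rightarrow> 'e sig \<Rightarrow> (name \<Rightarrow> 'v \<Rightarrow> ('v \<Rightarrow> 'y) \<Rightarrow> 'y) \<Rightarrow> ('x \<Rightarrow> 'y) \<Rightarrow> ('v, 'x) tree \<Rightarrow> 'y" where
  "lift S \<Sigma> H f (Ret x) = f x"
| "lift S \<Sigma> H f (Node op a \<kappa>) = H op a (restrict (\<lambda>b. lift S \<Sigma> H f (\<kappa> b)) (TA S (opB \<Sigma> op)))"

inductive ttyp :: "('e, 'w, 'v) vsem \<Rightarrow> 'e sig \<Rightarrow> 'e ctx \<Rightarrow> (name \<times> 'e vty) list \<Rightarrow> 'w tmpl \<Rightarrow> bool"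
  for S \<Sigma> where
  tz: "map_of Z z = Some B \<Longrightarrow> vtyp S \<Gamma> v B \<Longrightarrow> ttyp S \<Sigma> \<Gamma> Z (TZ z v)"
| tif: "vtyp S \<Gamma> v TBool \<Longrightarrow> ttyp S \<Sigma> \<Gamma> Z T1 \<Longrightarrow> ttyp S \<Sigma> \<Gamma> Z T2 \<Longrightarrow> ttyp S \<Sigma> \<Gamma> Z (TIf v T1 T2)"
| top: "(op, A, B) \<in> \<Sigma> \<Longrightarrow> vtyp S \<Gamma> v A \<Longrightarrow> ttyp S \<Sigma> ((y, B) # \<Gamma>) Z T \<Longrightarrow>
        ttyp S \<Sigma> \<Gamma> Z (TOp op v y T)"

text \<open>[[Z]]Y: a tuple (list aligned with Z) of functions [[B_j]] -> Y.\<close>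
definition zset :: "('e, 'w, 'v) vsem \<Rightarrow> (name \<times> 'e vty) list \<Rightarrow> 'y set \<Rightarrow> ('v \<Rightarrow> 'y) list set" where
  "zset S Z Y = {\<zeta>. length \<zeta> = length Z \<and> (\<forall>j<length Z. \<zeta> ! j \<in> TA S (snd (Z ! j)) \<rightarrow> Y)}"

fun zlook :: "(name \<times> 'e vty) list \<Rightarrow> ('v \<Rightarrow> 'y) list \<Rightarrow> name \<Rightarrow> ('v \<Rightarrow> 'y)" where
  "zlook ((z', B) # Z) (g # \<zeta>) z = (if z = z' then g else zlook Z \<zeta> z)"
| "zlook _ _ z = undefined"

fun tden :: "('e, 'w, 'v) vsem \<Rightarrow> 'e sig \<Rightarrow> (name \<Rightarrow> 'v \<Rightarrow> ('v \<Rightarrow> 'y) \<Rightarrow> 'y) \<Rightarrow>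
    'e ctx \<Rightarrow> (name \<times> 'e vty) list \<Rightarrow> 'w tmpl \<Rightarrow> 'v list \<Rightarrow> ('v \<Rightarrow> 'y) list \<Rightarrow> 'y" where
  "tden S \<Sigma> H \<Gamma> Z (TZ z v) \<eta> \<zeta> = zlook Z \<zeta> z (vden S \<Gamma> v \<eta>)"
| "tden S \<Sigma> H \<Gamma> Z (TIf v T1 T2) \<eta> \<zeta> =
     (if vden S \<Gamma> v \<eta> = tt S then tden S \<Sigma> H \<Gamma> Z T1 \<eta> \<zeta> else tden S \<Sigma> H \<Gamma> Z T2 \<eta> \<zeta>)"
| "tden S \<Sigma> H \<Gamma> Z (TOp op v y T) \<eta> \<zeta> =
     H op (vden S \<Gamma> v \<eta>)
       (restrict (\<lambda>b. tden S \<Sigma> H ((y, opB \<Sigma> op) # \<Gamma>) Z T (b # \<eta>) \<zeta>) (TA S (opB \<Sigma> op)))"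

definition templ_hom :: "('e, 'w, 'v) vsem \<Rightarrow> 'e sig \<Rightarrow> 'x set \<Rightarrow>
    (name \<Rightarrow> 'v \<Rightarrow> ('v \<Rightarrow> 'y) \<Rightarrow> 'y) \<Rightarrow> (('v, 'x) tree \<Rightarrow> 'y) \<Rightarrow> bool" where
  "templ_hom S \<Sigma> X H \<phi> \<longleftrightarrow>
     (\<forall>\<Gamma> Z T \<eta> \<zeta>. ttyp S \<Sigma> \<Gamma> Z T \<longrightarrow> \<eta> \<in> env S \<Gamma> \<longrightarrow> \<zeta> \<in> zset S Z (free_set S \<Sigma> X) \<longrightarrow>
        \<phi> (tden S \<Sigma> free_interp \<Gamma> Z T \<eta> \<zeta>) = tden S \<Sigma> H \<Gamma> Z T \<eta> (map (\<lambda>g. \<phi> \<circ> g) \<zeta>))"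

end

theory Submission
  imports Defs
begin

text \<open>Both halves rest on the fact that template denotations are built from the operations of
the interpretation only.  Hence a homomorphism of interpretations, such as the lift
\<open>f\<^sup>\<dagger>\<^sub>H\<close>, commutes with them (induction on the typing derivation).  Conversely, the generic
template \<open>op(x; y. k(y))\<close> denotes \<open>in\<^sub>o\<^sub>p(a; \<kappa>)\<close> in the free interpretation and
\<open>H\<^sub>o\<^sub>p(a, \<phi> \<circ> \<kappa>)\<close> in \<open>H\<close>, so commuting with it makes \<open>\<phi>\<close> a homomorphism; by induction on
trees \<open>\<phi>\<close> is then the lift of its restriction \<open>x \<mapsto> \<phi>(in\<^sub>r\<^sub>e\<^sub>t\<^sub>u\<^sub>r\<^sub>n(x))\<close>.\<close>

lemma opB_eqI:
  assumes "wf_sig \<Sigma>" and "(op, A, B) \<in> \<Sigma>"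
  shows "opB \<Sigma> op = B"
  unfolding opB_def
proof (rule the_equality)
  show "\<exists>A. (op, A, B) \<in> \<Sigma>" using assms(2) by blast
next
  fix B' assume "\<exists>A'. (op, A', B') \<in> \<Sigma>"
  then show "B' = B" using assms unfolding wf_sig_def by blast
qed

lemma zlook_map_comp:
  assumes "map_of Z z = Some B" and "length \<zeta> = length Z"
  shows "zlook Z (map (\<lambda>g. \<phi> \<circ> g) \<zeta>) z x = \<phi> (zlook Z \<zeta> z x)"
  using assms
proof (induction Z arbitrary: \<zeta>)
  case Nil
  then show ?case by simp
next
  case (Cons p Z)
  obtain g \<zeta>' where "\<zeta> = g # \<zeta>'" using Cons.prems(2) by (cases \<zeta>) auto
  with Cons show ?case by (cases p) (auto split: if_splits)
qed

lemma lift_tden_free_interp: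
  assumes "wf_sig \<Sigma>" and "ttyp S \<Sigma> \<Gamma> Z T" and "length \<zeta> = length Z"
  shows "lift S \<Sigma> H f (tden S \<Sigma> free_interp \<Gamma> Z T \<eta> \<zeta>)
       = tden S \<Sigma> H \<Gamma> Z T \<eta> (map (\<lambda>g. lift S \<Sigma> H f \<circ> g) \<zeta>)"
  using assms(2,3)
proof (induction arbitrary: \<eta> rule: ttyp.induct)
  case (tz Z z B \<Gamma> v)
  then show ?case by (simp add: zlook_map_comp[unfolded comp_def])
next
  case (tif \<Gamma> v Z T1 T2)
  then show ?case by simp
next
  case (top op A B \<Gamma> v y Z T)
  have "opB \<Sigma> op = B" using assms(1) top(1) by (rule opB_eqI)
  with top.IH[OF top.prems] show ?case
    by (simp add: free_interp_def restrict_def comp_def cong: if_cong)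
qed

definition op_tmpl :: "name \<Rightarrow> 'w tmpl" where
  "op_tmpl op = TOp op (VVar ''x'') ''y'' (TZ ''k'' (VVar ''y''))"

lemma ttyp_op_tmpl:
  assumes "(op, A, B) \<in> \<Sigma>"
  shows "ttyp S \<Sigma> [(''x'', A)] [(''k'', B)] (op_tmpl op)"
  unfolding op_tmpl_def by (rule ttyp.top[OF assms]) (auto intro: ttyp.tz)

lemma tden_op_tmpl:
  assumes "opB \<Sigma> op = B"
  shows "tden S \<Sigma> H [(''x'', A)] [(''k'', B)] (op_tmpl op) [a] [g] = H op a (restrict g (TA S B))"
  using assms by (simp add: op_tmpl_def)

lemma templ_hom_lift:
  assumes "wf_sig \<Sigma>"
  shows "templ_hom S \<Sigma> X H (lift S \<Sigma> H f)"
  unfolding templ_hom_def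
  using lift_tden_free_interp[OF assms] by (auto simp: zset_def)

lemma templ_hom_node:
  assumes "wf_sig \<Sigma>" and "templ_hom S \<Sigma> X H \<phi>"
    and "(op, A, B) \<in> \<Sigma>" and "a \<in> TA S A" and "\<kappa> \<in> extensional (TA S B)"
    and "\<forall>b \<in> TA S B. \<kappa> b \<in> free_set S \<Sigma> X"
  shows "\<phi> (Node op a \<kappa>) = H op a (restrict (\<phi> \<circ> \<kappa>) (TA S B))"
proof -
  have opB: "opB \<Sigma> op = B" using assms(1,3) by (rule opB_eqI)
  have "[a] \<in> env S [(''x'', A)]" using assms(4) by (simp add: env_def)
  moreover have "[\<kappa>] \<in> zset S [(''k'', B)] (free_set S \<Sigma> X)" using assms(6) by (auto simp: zset_def)
  ultimately have "\<phi> (tden S \<Sigma> free_interp [(''x'', A)] [(''k'', B)] (op_tmpl op) [a] [\<kappa>])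
      = tden S \<Sigma> H [(''x'', A)] [(''k'', B)] (op_tmpl op) [a] (map (\<lambda>g. \<phi> \<circ> g) [\<kappa>])"
    using assms(2) ttyp_op_tmpl[OF assms(3)] unfolding templ_hom_def by blast
  then show ?thesis
    using assms(5) by (simp add: tden_op_tmpl[OF opB] free_interp_def extensional_restrict)
qed

lemma templ_hom_eq_lift:
  assumes "wf_sig \<Sigma>" and "templ_hom S \<Sigma> X H \<phi>" and "t \<in> free_set S \<Sigma> X"
  shows "\<phi> t = lift S \<Sigma> H (\<lambda>x. \<phi> (Ret x)) t"
  using assms(3)
proof (induction rule: free_set.induct)
  case (ret x)
  then show ?case by simp
next
  case (node op A B a \<kappa>)
  have "opB \<Sigma> op = B" using assms(1) node(1) by (rule opB_eqI)
  with node templ_hom_node[OF assms(1,2) node(1-3)] show ?case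
    by (simp add: restrict_def comp_def cong: if_cong)
qed

theorem lemma9:
  fixes S :: "('e, 'w, 'v) vsem" and \<Sigma> :: "'e sig" and X :: "'x set" and Y :: "'y set"
    and H :: "name \<Rightarrow> 'v \<Rightarrow> ('v \<Rightarrow> 'y) \<Rightarrow> 'y"
  assumes "sem_ok S" and "wf_sig \<Sigma>" and "is_interp S \<Sigma> Y H"
  shows "(\<forall>f \<in> X \<rightarrow> Y. templ_hom S \<Sigma> X H (lift S \<Sigma> H f))
       \<and> (\<forall>\<phi> \<in> free_set S \<Sigma> X \<rightarrow> Y. templ_hom S \<Sigma> X H \<phi> \<longrightarrow>
            (\<exists>f \<in> X \<rightarrow> Y. \<forall>t \<in> free_set S \<Sigma> X. \<phi> t = lift S \<Sigma> H f t))"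
proof (intro conjI ballI impI)
  show "templ_hom S \<Sigma> X H (lift S \<Sigma> H f)" for f
    using assms(2) by (rule templ_hom_lift)
next
  fix \<phi> assume "\<phi> \<in> free_set S \<Sigma> X \<rightarrow> Y" and "templ_hom S \<Sigma> X H \<phi>"
  moreover have "(\<lambda>x. \<phi> (Ret x)) \<in> X \<rightarrow> Y" using \<open>\<phi> \<in> free_set S \<Sigma> X \<rightarrow> Y\<close>
    by (auto intro: free_set.ret)
  ultimately show "\<exists>f \<in> X \<rightarrow> Y. \<forall>t \<in> free_set S \<Sigma> X. \<phi> t = lift S \<Sigma> H f t"
    using templ_hom_eq_lift[OF assms(2)] by blast
qed

end
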